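(* Let the words $C_n$, $D_n$ over $\{1,2\}$ be defined by $C_1=1$, $D_1=2$, $C_{k+1}=C_k\,1\,D_k$, $D_{k+1}=C_k\,2\,D_k$ for $k\ge 1$. For a word $w=w_1\cdots w_m$, let $N_{12}(w)$ be the number of pairs $i<j$ with $w_i=1$, $w_j=2$, and $N_{21}(w)$ the number of pairs $i<j$ with $w_i=2$, $w_j=1$. Then for all $n\geq 2$, $$N_{12}(C_n)=N_{12}(D_n)=2\cdot 4^{n-2}+(n-2)\cdot 2^{n-2},\qquad N_{21}(C_n)=N_{21}(D_n)=2\cdot 4^{n-2}-n\cdot 2^{n-2}.$$
   Context: $N_{12}(w)$ and $N_{21}(w)$ are the numbers of occurrences in $w$ of the classical patterns $1\text{-}2$ and $2\text{-}1$ respectively. *)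

theory Defs
  imports Main
begin

text \<open>Words over the alphabet {1,2} are represented as lists of naturals.
  CD n = (C_n, D_n) for n \<ge> 1; the value at 0 is an unused placeholder
  (chosen equal to the n = 1 case).\<close>

fun CD :: "nat \<Rightarrow> nat list \<times> nat list" where
  "CD 0 = ([1], [2])"
| "CD (Suc 0) = ([1], [2])"
| "CD (Suc (Suc k)) = (let (c, d) = CD (Suc k) in (c @ [1] @ d, c @ [2] @ d))"

definition C :: "nat \<Rightarrow> nat list" where "C n = fst (CD n)"
definition D :: "nat \<Rightarrow> nat list" where "D n = snd (CD n)"

definition Npat :: "nat \<Rightarrow> nat \<Rightarrow> nat list \<Rightarrow> nat" where
  "Npat a b w = card {(i, j). i < j \<and> j < length w \<and> w ! i = a \<and> w ! j = b}"

definition N12 :: "nat list \<Rightarrow> nat" where "N12 w = Npat 1 2 w"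
definition N21 :: "nat list \<Rightarrow> nat" where "N21 w = Npat 2 1 w"

end

theory Submission
  imports Defs
begin

text \<open>A pattern count is additive over a concatenation up to the cross term
  \<open>count_list xs a * count_list ys b\<close>. Both \<open>C (k+2)\<close> and \<open>D (k+2)\<close> are
  \<open>C (k+1)\<close> and \<open>D (k+1)\<close> joined by one letter, and the letter counts of
  \<open>C (k+1)\<close>, \<open>D (k+1)\<close> are \<open>2^k\<close> and \<open>2^k - 1\<close>. Hence \<open>C (k+2)\<close> and \<open>D (k+2)\<close>
  get the same pattern counts, and each count doubles at every step up to an
  explicit term: \<open>4^k + 2^k\<close> for \<open>N12\<close> and \<open>4^k - 2^k\<close> for \<open>N21\<close>.\<close>

lemma card_nth_eq_count_list: "card {j. j < length xs \<and> xs ! j = b} = count_list xs b"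
  by (simp add: count_list_eq_length_filter length_filter_conv_card eq_commute)

lemma Npat_Nil [simp]: "Npat a b [] = 0"
  by (simp add: Npat_def)

lemma Npat_Cons [simp]:
  "Npat a b (x # xs) = (if x = a then count_list xs b else 0) + Npat a b xs"
proof -
  let ?S = "\<lambda>w. {(i, j). i < j \<and> j < length w \<and> w ! i = a \<and> w ! j = b}"
  let ?A = "if x = a then (\<lambda>j. (0::nat, Suc j)) ` {j. j < length xs \<and> xs ! j = b} else {}"
  let ?B = "map_prod Suc Suc ` ?S xs"
  have finite_S: "finite (?S w)" for w
    by (rule finite_subset[of _ "{..<length w} \<times> {..<length w}"]) auto
  have split: "?S (x # xs) = ?A \<union> ?B"
  proof (rule set_eqI, clarify)
    fix i j
    show "((i, j) \<in> ?S (x # xs)) = ((i, j) \<in> ?A \<union> ?B)"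
      by (cases i; cases j) (auto simp: image_iff)
  qed
  have "card (?S (x # xs)) = card ?A + card ?B"
    unfolding split by (rule card_Un_disjoint) (use finite_S in auto)
  also have "card ?A = (if x = a then count_list xs b else 0)"
    by (simp add: card_image inj_on_def card_nth_eq_count_list)
  also have "card ?B = card (?S xs)"
    by (rule card_image) (simp add: inj_on_def)
  finally show ?thesis
    unfolding Npat_def .
qed

lemma Npat_append:
  "Npat a b (xs @ ys) = Npat a b xs + Npat a b ys + count_list xs a * count_list ys b"
  by (induction xs) auto

lemma C_Suc_0: "C (Suc 0) = [1]" and D_Suc_0: "D (Suc 0) = [2]"
  by (simp_all add: C_def D_def)

lemma C_Suc_Suc: "C (Suc (Suc k)) = C (Suc k) @ 1 # D (Suc k)"
  and D_Suc_Suc: "D (Suc (Suc k)) = C (Suc k) @ 2 # D (Suc k)"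
  by (simp_all add: C_def D_def split: prod.splits)

lemma count_list_CD_1: "count_list (C (Suc k)) 1 = 2 ^ k \<and> count_list (D (Suc k)) 1 + 1 = 2 ^ k"
  by (induction k) (simp_all add: C_Suc_0 D_Suc_0 C_Suc_Suc D_Suc_Suc)

lemma count_list_CD_2: "count_list (C (Suc k)) 2 + 1 = 2 ^ k \<and> count_list (D (Suc k)) 2 = 2 ^ k"
  by (induction k) (simp_all add: C_Suc_0 D_Suc_0 C_Suc_Suc D_Suc_Suc)

lemma N12_C_Suc_Suc:
  "N12 (C (Suc (Suc k))) = N12 (C (Suc k)) + N12 (D (Suc k)) + 4 ^ k + 2 ^ k"
  and N12_D_Suc_Suc:
  "N12 (D (Suc (Suc k))) = N12 (C (Suc k)) + N12 (D (Suc k)) + 4 ^ k + 2 ^ k"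
proof -
  have counts: "count_list (C (Suc k)) 1 = 2 ^ k" "count_list (D (Suc k)) 2 = 2 ^ k"
    using count_list_CD_1 count_list_CD_2 by auto
  have "(4::nat) ^ k = 2 ^ k * 2 ^ k"
    by (simp flip: power_mult_distrib)
  then show "N12 (C (Suc (Suc k))) = N12 (C (Suc k)) + N12 (D (Suc k)) + 4 ^ k + 2 ^ k"
    and "N12 (D (Suc (Suc k))) = N12 (C (Suc k)) + N12 (D (Suc k)) + 4 ^ k + 2 ^ k"
    using counts by (simp_all add: N12_def C_Suc_Suc D_Suc_Suc Npat_append)
qed

lemma N21_C_Suc_Suc:
  "N21 (C (Suc (Suc k))) + 2 ^ k = N21 (C (Suc k)) + N21 (D (Suc k)) + 4 ^ k"
  and N21_D_Suc_Suc:
  "N21 (D (Suc (Suc k))) + 2 ^ k = N21 (C (Suc k)) + N21 (D (Suc k)) + 4 ^ k"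
proof -
  define c where "c = count_list (C (Suc k)) 2"
  have counts: "count_list (C (Suc k)) 2 = c" "count_list (D (Suc k)) 1 = c" "2 ^ k = c + 1"
    using count_list_CD_1[of k] count_list_CD_2[of k] by (auto simp: c_def)
  have "(4::nat) ^ k = 2 ^ k * 2 ^ k"
    by (simp flip: power_mult_distrib)
  then have "(4::nat) ^ k = (c + 1) * (c + 1)"
    by (simp only: counts(3))
  then show "N21 (C (Suc (Suc k))) + 2 ^ k = N21 (C (Suc k)) + N21 (D (Suc k)) + 4 ^ k"
    and "N21 (D (Suc (Suc k))) + 2 ^ k = N21 (C (Suc k)) + N21 (D (Suc k)) + 4 ^ k"
    using counts by (simp_all add: N21_def C_Suc_Suc D_Suc_Suc Npat_append)
qed

lemma N12_D_eq_N12_C: "N12 (D (Suc (Suc k))) = N12 (C (Suc (Suc k)))"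
  by (simp only: N12_C_Suc_Suc N12_D_Suc_Suc)

lemma N21_D_eq_N21_C: "N21 (D (Suc (Suc k))) = N21 (C (Suc (Suc k)))"
  using N21_C_Suc_Suc[of k] N21_D_Suc_Suc[of k] by simp

lemma N12_C_closed_form: "N12 (C (Suc (Suc m))) = 2 * 4 ^ m + m * 2 ^ m"
proof (induction m)
  case 0
  show ?case
    by (simp add: N12_def C_Suc_Suc C_Suc_0 D_Suc_0)
next
  case (Suc m)
  then show ?case
    by (simp add: N12_C_Suc_Suc[of "Suc m"] N12_D_eq_N12_C algebra_simps)
qed

lemma N21_C_closed_form: "N21 (C (Suc (Suc m))) + (m + 2) * 2 ^ m = 2 * 4 ^ m"
proof (induction m)
  case 0
  show ?case
    by (simp add: N21_def C_Suc_Suc C_Suc_0 D_Suc_0)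
next
  case (Suc m)
  then show ?case
    using N21_C_Suc_Suc[of "Suc m"] by (simp add: N21_D_eq_N21_C algebra_simps)
qed

theorem proposition3:
  fixes n :: nat
  assumes "n \<ge> 2"
  shows "int (N12 (C n)) = 2 * 4 ^ (n - 2) + int (n - 2) * 2 ^ (n - 2)
       \<and> int (N12 (D n)) = 2 * 4 ^ (n - 2) + int (n - 2) * 2 ^ (n - 2)
       \<and> int (N21 (C n)) = 2 * 4 ^ (n - 2) - int n * 2 ^ (n - 2)
       \<and> int (N21 (D n)) = 2 * 4 ^ (n - 2) - int n * 2 ^ (n - 2)"
proof -
  obtain m where n: "n = Suc (Suc m)"
    using assms by (metis add_2_eq_Suc le_Suc_ex)
  have "int (N12 (C n)) = 2 * 4 ^ m + int m * 2 ^ m"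
    using N12_C_closed_form[of m] unfolding n by simp
  moreover have "int (N21 (C n)) + int n * 2 ^ m = 2 * 4 ^ m"
    using arg_cong[where f = int, OF N21_C_closed_form[of m]] unfolding n
    by (simp add: algebra_simps)
  ultimately show ?thesis
    unfolding n by (simp add: N12_D_eq_N12_C N21_D_eq_N21_C eq_diff_eq)
qed

end
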